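(* Let $\mathcal{M}$ be a set of mappings over a schema $\Sigma$, $\mathcal{D}$ a database instance of $\Sigma$, and $q(\vec x)\leftarrow L_1(\vec v_1),\dots,L_n(\vec v_n)$ a conjunctive query. If the answer template matrix $\mathrm{atm}(\mathrm{unf}(q(\vec x),\mathrm{wrap}(\mathcal{M})))$ does not contain repeated rows, then $$|\mathrm{unf}(q(\vec x),\mathcal{M})^{\mathcal{D}}|=\sum_{q_u\in\mathrm{unf}(q,\mathrm{wrap}(\mathcal{M}))}|q_u(\vec x)^{\mathcal{D}}|.$$
   Context: A mapping is $L(\vec f(\vec x))\leftsquigarrow V(\vec x)$ with $L$ a concept or role name, $\vec f(\vec x)$ a tuple of terms each of the form $g(\vec y)$ ($g$ a function symbol, $\vec y\subseteq\vec x$), and $V$ a view name with extension $V^{\mathcal{D}}$ given by a query over $\Sigma$. Signature: $\mathrm{sign}(m)=(L,\vec f)$. Unfolding of a CQ $q(\vec x)\leftarrow L_1(\vec v_1),\dots,L_n(\vec v_n)$: the non-recursive Datalog query $(q_{\mathrm{unf}}(\vec x),\Pi)$ where $\Pi$ is a minimal (up to renaming) set of rules containing, for every tuple $(m_1,\dots,m_n)$ of mappings with $m_i=L_i(\vec f_i(\vec x_i))\leftsquigarrow V_i(\vec z_i)$ and every mgu $\sigma$ of $\{(L_i(\vec v_i),L_i(\vec f_i(\vec x_i)))\}$, the rule $q_{\mathrm{unf}}(\sigma(\vec x))\leftarrow V_1(\sigma(\vec z_1)),\dots,V_n(\sigma(\vec z_n))$; the sum ranges over these rules viewed as CQs $q_u$.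 Wrap: for each signature $(L,\vec f)$, the mappings of that signature $\{L(\vec f(\vec v_i))\leftsquigarrow V_i(\vec v_i)\}_i$ are replaced by the single mapping $L(\vec f(\vec v))\leftsquigarrow W(\vec v)$ with $W$ a fresh view for $(W(\vec v),\{W(\vec v_i)\leftarrow V_i(\vec v_i)\}_i)$; $\mathrm{wrap}(\mathcal{M})$ is the union over all signatures. Answer template matrix: if the rules of an unfolding are $q_{\mathrm{unf}}(\vec f_j(\vec y_j))\leftarrow V^j_1,\dots,V^j_n$ for $1\le j\le m$, where $\vec f_j$ is the tuple of function symbols occurring in the head, then $\mathrm{atm}(q_{\mathrm{unf}})$ is the matrix whose rows are $\vec f_1,\dots,\vec f_m$. *)

theory Defs
  imports Main
begin

datatype ('f, 'x) trm = Var 'x | Fun 'f "('f, 'x) trm list"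

primrec subst :: "('x \<Rightarrow> ('f, 'y) trm) \<Rightarrow> ('f, 'x) trm \<Rightarrow> ('f, 'y) trm" where
  "subst \<sigma> (Var x) = \<sigma> x"
| "subst \<sigma> (Fun f ts) = Fun f (map (subst \<sigma>) ts)"

datatype ('f, 'c) gtrm = Cst 'c | App 'f "('f, 'c) gtrm list"

primrec gval :: "('x \<Rightarrow> 'c) \<Rightarrow> ('f, 'x) trm \<Rightarrow> ('f, 'c) gtrm" where
  "gval \<alpha> (Var x) = Cst (\<alpha> x)"
| "gval \<alpha> (Fun f ts) = App f (map (gval \<alpha>) ts)"

definition is_unifier :: "('x \<Rightarrow> ('f, 'x) trm) \<Rightarrow> (('f, 'x) trm \<times> ('f, 'x) trm) set \<Rightarrow> bool" where
  "is_unifier \<sigma> E \<longleftrightarrow> (\<forall>(s, t) \<in> E. subst \<sigma> s = subst \<sigma> t)"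

definition is_mgu :: "('x \<Rightarrow> ('f, 'x) trm) \<Rightarrow> (('f, 'x) trm \<times> ('f, 'x) trm) set \<Rightarrow> bool" where
  "is_mgu \<sigma> E \<longleftrightarrow> is_unifier \<sigma> E \<and>
     (\<forall>\<theta>. is_unifier \<theta> E \<longrightarrow> (\<exists>\<delta>. \<forall>x. \<theta> x = subst \<delta> (\<sigma> x)))"

text \<open>A mapping  L(g1(ys1),...,gk(ysk)) <~ V(args):
  predicate (concept/role name) L, head terms gj(ysj), view name V, view variables args.\<close>
datatype ('L, 'f, 'w, 'vw) mapping =
  Mapping (m_pred: 'L) (m_head: "('f \<times> 'w list) list") (m_view: 'vw) (m_args: "'w list")

definition wf_mapping :: "('L, 'f, 'w, 'vw) mapping \<Rightarrow> bool" where
  "wf_mapping m \<longleftrightarrow> (\<forall>(g, ys) \<in> set (m_head m). set ys \<subseteq> set (m_args m))"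

datatype ('L, 'v) cq = CQ (cq_head: "'v list") (cq_body: "('L \<times> 'v list) list")

definition safe_cq :: "('L, 'v) cq \<Rightarrow> bool" where
  "safe_cq q \<longleftrightarrow> set (cq_head q) \<subseteq> (\<Union>(L, vs) \<in> set (cq_body q). set vs)"

datatype ('vw, 'f, 'x) rule = Rule (r_head: "('f, 'x) trm list") (r_body: "('vw \<times> ('f, 'x) trm list) list")

definition eval_rule :: "('vw \<Rightarrow> 'c list set) \<Rightarrow> ('vw, 'f, 'x) rule \<Rightarrow> ('f, 'c) gtrm list set" where
  "eval_rule ext r = {map (gval \<alpha>) (r_head r) | \<alpha>.
      \<forall>(V, ts) \<in> set (r_body r). map (gval \<alpha>) ts \<in> map Cst ` ext V}"

definition rename_rule :: "('x \<Rightarrow> 'x) \<Rightarrow> ('vw, 'f, 'x) rule \<Rightarrow> ('vw, 'f, 'x) rule" where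
  "rename_rule \<rho> r = Rule (map (subst (\<lambda>x. Var (\<rho> x))) (r_head r))
      (map (\<lambda>(V, ts). (V, map (subst (\<lambda>x. Var (\<rho> x))) ts)) (r_body r))"

text \<open>Query variables are tagged Inl; the variables of the mapping used for the i-th
  query atom are tagged Inr (i, w) (renaming apart).\<close>
definition unf_eqs :: "('L, 'v) cq \<Rightarrow> ('L, 'f, 'w, 'vw) mapping list
    \<Rightarrow> (('f, 'v + nat \<times> 'w) trm \<times> ('f, 'v + nat \<times> 'w) trm) set" where
  "unf_eqs q ms = set (concat (map (\<lambda>i.
      map (\<lambda>(u, (g, ys)). (Var (Inl u), Fun g (map (\<lambda>w. Var (Inr (i, w))) ys)))
        (zip (snd (cq_body q ! i)) (m_head (ms ! i)))) [0..<length ms]))"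

definition mk_rule :: "('L, 'v) cq \<Rightarrow> ('L, 'f, 'w, 'vw) mapping list
    \<Rightarrow> ('v + nat \<times> 'w \<Rightarrow> ('f, 'v + nat \<times> 'w) trm) \<Rightarrow> ('vw, 'f, 'v + nat \<times> 'w) rule" where
  "mk_rule q ms \<sigma> = Rule (map (\<lambda>v. \<sigma> (Inl v)) (cq_head q))
      (map (\<lambda>i. (m_view (ms ! i), map (\<lambda>w. \<sigma> (Inr (i, w))) (m_args (ms ! i)))) [0..<length ms])"

definition unf_rules :: "('L, 'v) cq \<Rightarrow> ('L, 'f, 'w, 'vw) mapping set
    \<Rightarrow> ('vw, 'f, 'v + nat \<times> 'w) rule set" where
  "unf_rules q M = {mk_rule q ms \<sigma> | ms \<sigma>.
      length ms = length (cq_body q) \<and> set ms \<subseteq> M \<and>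
      (\<forall>i < length ms. m_pred (ms ! i) = fst (cq_body q ! i) \<and>
          length (m_head (ms ! i)) = length (snd (cq_body q ! i))) \<and>
      is_mgu \<sigma> (unf_eqs q ms)}"

definition rename_rel :: "('vw, 'f, 'x) rule set \<Rightarrow> (('vw, 'f, 'x) rule \<times> ('vw, 'f, 'x) rule) set" where
  "rename_rel R = {(r, r'). r \<in> R \<and> r' \<in> R \<and> (\<exists>\<rho>. bij \<rho> \<and> rename_rule \<rho> r = r')}"

text \<open>The program of the unfolding: rules taken up to renaming (one class per rule).\<close>
definition unf_program :: "('L, 'v) cq \<Rightarrow> ('L, 'f, 'w, 'vw) mapping set
    \<Rightarrow> ('vw, 'f, 'v + nat \<times> 'w) rule set set" where
  "unf_program q M = unf_rules q M // rename_rel (unf_rules q M)"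

definition rule_rep :: "('vw, 'f, 'x) rule set \<Rightarrow> ('vw, 'f, 'x) rule" where
  "rule_rep C = (SOME r. r \<in> C)"

definition unf_answers :: "('L, 'v) cq \<Rightarrow> ('L, 'f, 'w, 'vw) mapping set
    \<Rightarrow> ('vw \<Rightarrow> 'c list set) \<Rightarrow> ('f, 'c) gtrm list set" where
  "unf_answers q M ext = (\<Union>r \<in> unf_rules q M. eval_rule ext r)"

definition msig :: "('L, 'f, 'w, 'vw) mapping \<Rightarrow> 'L \<times> ('f \<times> nat) list" where
  "msig m = (m_pred m, map (\<lambda>(g, ys). (g, length ys)) (m_head m))"

fun mk_terms :: "nat \<Rightarrow> ('f \<times> nat) list \<Rightarrow> ('f \<times> nat list) list" where
  "mk_terms k [] = []"
| "mk_terms k ((g, a) # r) = (g, [k..<k + a]) # mk_terms (k + a) r"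

text \<open>The single mapping of signature s, using the fresh view named s itself.\<close>
definition wmap :: "'L \<times> ('f \<times> nat) list \<Rightarrow> ('L, 'f, nat, 'L \<times> ('f \<times> nat) list) mapping" where
  "wmap s = Mapping (fst s) (mk_terms 0 (snd s)) s [0..<sum_list (map snd (snd s))]"

definition wrap :: "('L, 'f, 'w, 'vw) mapping set \<Rightarrow> ('L, 'f, nat, 'L \<times> ('f \<times> nat) list) mapping set" where
  "wrap M = wmap ` msig ` M"

text \<open>Extension of the fresh view W_s, defined by the rules W(v_i) <- V_i(v_i).\<close>
definition wrap_ext :: "('L, 'f, 'w, 'vw) mapping set \<Rightarrow> ('vw \<Rightarrow> 'c list set)
    \<Rightarrow> 'L \<times> ('f \<times> nat) list \<Rightarrow> 'c list set" where
  "wrap_ext M ext s = (\<Union>m \<in> {m \<in> M. msig m = s}.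
      {concat (map (\<lambda>(g, ys). map \<alpha> ys) (m_head m)) | \<alpha>. map \<alpha> (m_args m) \<in> ext (m_view m)})"

primrec head_sym :: "('f, 'x) trm \<Rightarrow> 'f option" where
  "head_sym (Var x) = None"
| "head_sym (Fun f ts) = Some f"

definition atm_row :: "('vw, 'f, 'x) rule \<Rightarrow> 'f option list" where
  "atm_row r = map head_sym (r_head r)"

definition atm_no_repeated_rows :: "('vw, 'f, 'x) rule set set \<Rightarrow> bool" where
  "atm_no_repeated_rows P \<longleftrightarrow> inj_on (\<lambda>C. atm_row (rule_rep C)) P"

end

theory Submission
  imports Defs
begin

(*
  For each tuple of mappings matching the body of q, the unfolding contains one rule built from an
  mgu of the induced equations, and the answers of that rule do not depend on the mgu: they are
  the object terms obtained by instantiating the heads of the mappings with tuples of their views.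
  Wrapping merges the views of all mappings of the same signature and therefore leaves this set of
  answers unchanged, so the answers of the unfolding over M are the union of the answers of the
  rules of the unfolding over wrap(M), one rule per renaming class. Every answer of a rule has the
  head function symbols of the rule as its top symbols, i.e. it carries the rule's row of the
  answer template matrix. Distinct rows therefore make the union disjoint, and the cardinalities add.
*)

section \<open>Terms and renaming\<close>

fun term_vars :: "('f, 'x) trm \<Rightarrow> 'x set" where
  "term_vars (Var x) = {x}"
| "term_vars (Fun f ts) = (\<Union>t \<in> set ts. term_vars t)"

lemma finite_term_vars: "finite (term_vars t)"
  by (induct t) auto

lemma gval_cong: "(\<And>x. x \<in> term_vars t \<Longrightarrow> \<alpha> x = \<alpha>' x) \<Longrightarrow> gval \<alpha> t = gval \<alpha>' t"
  by (induct t) auto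

lemma subst_Var_id: "subst Var t = t"
  by (induct t) (auto simp: map_idI)

lemma subst_Var_subst_Var: "subst (\<lambda>x. Var (\<rho>' x)) (subst (\<lambda>x. Var (\<rho> x)) t) = subst (\<lambda>x. Var (\<rho>' (\<rho> x))) t"
  by (induct t) auto

lemma gval_subst_Var: "gval \<alpha> (subst (\<lambda>x. Var (\<rho> x)) t) = gval (\<alpha> \<circ> \<rho>) t"
  by (induct t) auto

primrec gtrm_head :: "('f, 'c) gtrm \<Rightarrow> 'f option" where
  "gtrm_head (Cst c) = None"
| "gtrm_head (App f ts) = Some f"

lemma gtrm_head_gval: "gtrm_head (gval \<alpha> t) = head_sym t"
  by (cases t) auto

lemma map_App_Cst_inject:
  "App f (map (Cst \<circ> g) xs) = App f' (map (Cst \<circ> g') ys) \<Longrightarrow> map g xs = map g' ys"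
proof (induct xs arbitrary: ys)
  case (Cons x xs)
  then show ?case by (cases ys) auto
qed simp

lemma rename_rule_id: "rename_rule id r = r"
  by (cases r) (auto simp: rename_rule_def subst_Var_id[unfolded id_def] id_def map_idI split: prod.splits)

lemma rename_rule_rename_rule: "rename_rule \<rho>' (rename_rule \<rho> r) = rename_rule (\<rho>' \<circ> \<rho>) r"
  by (simp add: rename_rule_def subst_Var_subst_Var case_prod_beta o_def)

lemma eval_rule_rename_rule_subset: "eval_rule ext (rename_rule \<rho> r) \<subseteq> eval_rule ext r"
proof
  fix a assume "a \<in> eval_rule ext (rename_rule \<rho> r)"
  then obtain \<alpha> where a: "a = map (gval \<alpha>) (r_head (rename_rule \<rho> r))"
    and body: "\<forall>(V, ts) \<in> set (r_body (rename_rule \<rho> r)). map (gval \<alpha>) ts \<in> map Cst ` ext V"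
    unfolding eval_rule_def by blast
  have "a = map (gval (\<alpha> \<circ> \<rho>)) (r_head r)"
    using a by (simp add: rename_rule_def gval_subst_Var)
  moreover have "\<forall>(V, ts) \<in> set (r_body r). map (gval (\<alpha> \<circ> \<rho>)) ts \<in> map Cst ` ext V"
  proof clarify
    fix V ts assume "(V, ts) \<in> set (r_body r)"
    then have "(V, map (subst (\<lambda>x. Var (\<rho> x))) ts) \<in> set (r_body (rename_rule \<rho> r))"
      by (force simp: rename_rule_def)
    then show "map (gval (\<alpha> \<circ> \<rho>)) ts \<in> map Cst ` ext V"
      using body by (auto simp: gval_subst_Var o_def)
  qed
  ultimately show "a \<in> eval_rule ext r"
    unfolding eval_rule_def by blast
qed

lemma eval_rule_rename_rule:
  assumes "bij \<rho>"
  shows "eval_rule ext (rename_rule \<rho> r) = eval_rule ext r"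
proof
  have "inv \<rho> \<circ> \<rho> = id"
    using assms by (simp add: bij_is_inj)
  then have "rename_rule (inv \<rho>) (rename_rule \<rho> r) = r"
    by (simp only: rename_rule_rename_rule rename_rule_id)
  then show "eval_rule ext r \<subseteq> eval_rule ext (rename_rule \<rho> r)"
    using eval_rule_rename_rule_subset[of ext "inv \<rho>" "rename_rule \<rho> r"] by simp
qed (rule eval_rule_rename_rule_subset)

section \<open>Unifiers of a tuple of mappings\<close>

definition matches_body :: "('L, 'v) cq \<Rightarrow> ('L, 'f, 'w, 'vw) mapping list \<Rightarrow> bool" where
  "matches_body q ms \<longleftrightarrow> length ms = length (cq_body q) \<and>
      (\<forall>i < length ms. m_pred (ms ! i) = fst (cq_body q ! i) \<and>
          length (m_head (ms ! i)) = length (snd (cq_body q ! i)))"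

lemma unf_rules_iff:
  "r \<in> unf_rules q M \<longleftrightarrow>
     (\<exists>ms \<sigma>. r = mk_rule q ms \<sigma> \<and> matches_body q ms \<and> set ms \<subseteq> M \<and> is_mgu \<sigma> (unf_eqs q ms))"
  unfolding unf_rules_def matches_body_def by blast

definition body_positions :: "('L, 'v) cq \<Rightarrow> (nat \<times> nat) set" where
  "body_positions q = {(i, j). i < length (cq_body q) \<and> j < length (snd (cq_body q ! i))}"

abbreviation body_var :: "('L, 'v) cq \<Rightarrow> nat \<Rightarrow> nat \<Rightarrow> 'v" where
  "body_var q i j \<equiv> snd (cq_body q ! i) ! j"

abbreviation head_term :: "('L, 'f, 'w, 'vw) mapping list \<Rightarrow> nat \<Rightarrow> nat \<Rightarrow> 'f \<times> 'w list" where
  "head_term ms i j \<equiv> m_head (ms ! i) ! j"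

lemma body_positions_head_term:
  assumes "matches_body q ms" "(i, j) \<in> body_positions q"
  shows "i < length ms" "head_term ms i j \<in> set (m_head (ms ! i))"
  using assms by (auto simp: matches_body_def body_positions_def)

lemma body_var_in_body_positions:
  assumes "safe_cq q" "v \<in> set (cq_head q)"
  obtains i j where "(i, j) \<in> body_positions q" "body_var q i j = v"
  using assms unfolding safe_cq_def body_positions_def
  by (fastforce simp: in_set_conv_nth split: prod.splits)

lemma unf_eqs_eq:
  assumes "matches_body q ms"
  shows "unf_eqs q ms = (\<lambda>(i, j). (Var (Inl (body_var q i j)),
      Fun (fst (head_term ms i j)) (map (\<lambda>w. Var (Inr (i, w))) (snd (head_term ms i j)))))
    ` body_positions q"
  using assms unfolding unf_eqs_def matches_body_def body_positions_def
  by (simp add: set_zip Setcompr_eq_image image_image)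
    (auto simp: image_iff, metis fst_conv snd_conv, force)

lemma is_unifier_unf_eqs_iff:
  assumes "matches_body q ms"
  shows "is_unifier \<sigma> (unf_eqs q ms) \<longleftrightarrow> (\<forall>(i, j) \<in> body_positions q.
     \<sigma> (Inl (body_var q i j)) = Fun (fst (head_term ms i j)) (map (\<lambda>w. \<sigma> (Inr (i, w))) (snd (head_term ms i j))))"
  unfolding is_unifier_def unf_eqs_eq[OF assms] by (simp add: case_prod_beta o_def)

lemma is_unifier_unf_eqsD:
  assumes "matches_body q ms" "is_unifier \<sigma> (unf_eqs q ms)" "(i, j) \<in> body_positions q"
  shows "\<sigma> (Inl (body_var q i j)) =
    Fun (fst (head_term ms i j)) (map (\<lambda>w. \<sigma> (Inr (i, w))) (snd (head_term ms i j)))"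
  using assms(2,3) unfolding is_unifier_unf_eqs_iff[OF assms(1)] by blast

(* Every unifier identifies two mapping variables at the same argument position of head terms that
   instantiate the same query variable; the canonical mgu sends each mapping variable to a
   representative of its class under the closure of this relation. *)
definition linked :: "('L, 'v) cq \<Rightarrow> ('L, 'f, 'w, 'vw) mapping list \<Rightarrow> nat \<times> 'w \<Rightarrow> nat \<times> 'w \<Rightarrow> bool" where
  "linked q ms x y \<longleftrightarrow> (\<exists>i j i' j' k. (i, j) \<in> body_positions q \<and> (i', j') \<in> body_positions q \<and>
     body_var q i j = body_var q i' j' \<and>
     k < length (snd (head_term ms i j)) \<and> k < length (snd (head_term ms i' j')) \<and>
     x = (i, snd (head_term ms i j) ! k) \<and> y = (i', snd (head_term ms i' j') ! k))"

definition link_rep :: "('L, 'v) cq \<Rightarrow> ('L, 'f, 'w, 'vw) mapping list \<Rightarrow> nat \<times> 'w \<Rightarrow> nat \<times> 'w" where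
  "link_rep q ms x = (SOME y. (linked q ms)\<^sup>*\<^sup>* x y)"

lemma linked_sym: "linked q ms x y \<Longrightarrow> linked q ms y x"
  unfolding linked_def by metis

lemma linked_rtranclp_sym: "(linked q ms)\<^sup>*\<^sup>* x y \<Longrightarrow> (linked q ms)\<^sup>*\<^sup>* y x"
  by (induct rule: rtranclp_induct) (auto intro: converse_rtranclp_into_rtranclp linked_sym)

lemma linked_link_rep: "(linked q ms)\<^sup>*\<^sup>* x (link_rep q ms x)"
  unfolding link_rep_def by (rule someI[of _ x]) simp

lemma link_rep_eq:
  assumes "(linked q ms)\<^sup>*\<^sup>* x y"
  shows "link_rep q ms x = link_rep q ms y"
proof -
  have "(linked q ms)\<^sup>*\<^sup>* x = (linked q ms)\<^sup>*\<^sup>* y"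
    using assms linked_rtranclp_sym[OF assms] by (auto intro: rtranclp_trans)
  then show ?thesis
    unfolding link_rep_def by simp
qed

lemma linked_rtranclp_eq:
  assumes "\<forall>(i, j) \<in> body_positions q. \<forall>(i', j') \<in> body_positions q.
      body_var q i j = body_var q i' j' \<longrightarrow>
      map (\<lambda>w. f (i, w)) (snd (head_term ms i j)) = map (\<lambda>w. f (i', w)) (snd (head_term ms i' j'))"
    and "(linked q ms)\<^sup>*\<^sup>* x y"
  shows "f x = f y"
  using assms(2)
proof (induct rule: rtranclp_induct)
  case (step y z)
  then obtain i j i' j' k where ij: "(i, j) \<in> body_positions q" "(i', j') \<in> body_positions q"
      "body_var q i j = body_var q i' j'"
      and k: "k < length (snd (head_term ms i j))" "k < length (snd (head_term ms i' j'))"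
      and yz: "y = (i, snd (head_term ms i j) ! k)" "z = (i', snd (head_term ms i' j') ! k)"
    unfolding linked_def by blast
  have "map (\<lambda>w. f (i, w)) (snd (head_term ms i j)) ! k = map (\<lambda>w. f (i', w)) (snd (head_term ms i' j')) ! k"
    using assms(1) ij by fastforce
  then show ?case
    using step.hyps(3) k yz by simp
qed simp

definition consistent :: "('L, 'v) cq \<Rightarrow> ('L, 'f, 'w, 'vw) mapping list \<Rightarrow> bool" where
  "consistent q ms \<longleftrightarrow> (\<forall>(i, j) \<in> body_positions q. \<forall>(i', j') \<in> body_positions q.
     body_var q i j = body_var q i' j' \<longrightarrow>
     fst (head_term ms i j) = fst (head_term ms i' j') \<and>
     length (snd (head_term ms i j)) = length (snd (head_term ms i' j')))"

definition occurrence :: "('L, 'v) cq \<Rightarrow> 'v \<Rightarrow> nat \<times> nat" where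
  "occurrence q u = (SOME p. p \<in> body_positions q \<and> body_var q (fst p) (snd p) = u)"

lemma occurrence:
  assumes "(i, j) \<in> body_positions q"
  shows "occurrence q (body_var q i j) \<in> body_positions q"
    "body_var q (fst (occurrence q (body_var q i j))) (snd (occurrence q (body_var q i j))) = body_var q i j"
  using someI[of "\<lambda>p. p \<in> body_positions q \<and> body_var q (fst p) (snd p) = body_var q i j" "(i, j)"] assms
  unfolding occurrence_def by auto

definition canonical_mgu :: "('L, 'v) cq \<Rightarrow> ('L, 'f, 'w, 'vw) mapping list
    \<Rightarrow> 'v + nat \<times> 'w \<Rightarrow> ('f, 'v + nat \<times> 'w) trm" where
  "canonical_mgu q ms v = (case v of
       Inr x \<Rightarrow> Var (Inr (link_rep q ms x))
     | Inl u \<Rightarrow> if \<exists>(i, j) \<in> body_positions q. body_var q i j = u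
         then (case occurrence q u of (i, j) \<Rightarrow>
           Fun (fst (head_term ms i j)) (map (\<lambda>w. Var (Inr (link_rep q ms (i, w)))) (snd (head_term ms i j))))
         else Var (Inl u))"

lemma canonical_mgu_Inr: "canonical_mgu q ms (Inr x) = Var (Inr (link_rep q ms x))"
  by (simp add: canonical_mgu_def)

lemma canonical_mgu_Inl:
  assumes "(i, j) \<in> body_positions q" "occurrence q (body_var q i j) = (i0, j0)"
  shows "canonical_mgu q ms (Inl (body_var q i j)) =
    Fun (fst (head_term ms i0 j0)) (map (\<lambda>w. Var (Inr (link_rep q ms (i0, w)))) (snd (head_term ms i0 j0)))"
  using assms unfolding canonical_mgu_def by auto

lemma canonical_mgu_unifier:
  assumes "matches_body q ms" "consistent q ms"
  shows "is_unifier (canonical_mgu q ms) (unf_eqs q ms)"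
  unfolding is_unifier_unf_eqs_iff[OF assms(1)]
proof clarify
  fix i j assume ij: "(i, j) \<in> body_positions q"
  obtain i0 j0 where ij0: "occurrence q (body_var q i j) = (i0, j0)"
    by fastforce
  have pos0: "(i0, j0) \<in> body_positions q" "body_var q i0 j0 = body_var q i j"
    using occurrence[OF ij] ij0 by auto
  then have same: "fst (head_term ms i0 j0) = fst (head_term ms i j)"
      "length (snd (head_term ms i0 j0)) = length (snd (head_term ms i j))"
    using assms(2) ij unfolding consistent_def by fastforce+
  have "linked q ms (i0, snd (head_term ms i0 j0) ! k) (i, snd (head_term ms i j) ! k)"
    if "k < length (snd (head_term ms i j))" for k
    unfolding linked_def using that same(2) pos0 ij by (intro exI conjI) auto
  then have "link_rep q ms (i0, snd (head_term ms i0 j0) ! k) = link_rep q ms (i, snd (head_term ms i j) ! k)"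
    if "k < length (snd (head_term ms i j))" for k
    using that by (blast intro: link_rep_eq)
  then have "map (\<lambda>w. Var (Inr (link_rep q ms (i0, w)))) (snd (head_term ms i0 j0)) =
      map (\<lambda>w. Var (Inr (link_rep q ms (i, w)))) (snd (head_term ms i j))"
    using same(2) by (simp add: list_eq_iff_nth_eq)
  then show "canonical_mgu q ms (Inl (body_var q i j)) =
      Fun (fst (head_term ms i j)) (map (\<lambda>w. canonical_mgu q ms (Inr (i, w))) (snd (head_term ms i j)))"
    using same(1) by (simp add: canonical_mgu_Inl[OF ij ij0] canonical_mgu_Inr)
qed

lemma unifier_linked_eq:
  assumes "matches_body q ms" "is_unifier \<theta> (unf_eqs q ms)" "(linked q ms)\<^sup>*\<^sup>* x y"
  shows "\<theta> (Inr x) = \<theta> (Inr y)"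
proof (rule linked_rtranclp_eq[OF _ assms(3), where f = "\<lambda>x. \<theta> (Inr x)"], clarify)
  fix i j i' j' assume ij: "(i, j) \<in> body_positions q" "(i', j') \<in> body_positions q"
    "body_var q i j = body_var q i' j'"
  then have "Fun (fst (head_term ms i j)) (map (\<lambda>w. \<theta> (Inr (i, w))) (snd (head_term ms i j))) =
      Fun (fst (head_term ms i' j')) (map (\<lambda>w. \<theta> (Inr (i', w))) (snd (head_term ms i' j')))"
    using is_unifier_unf_eqsD[OF assms(1,2) ij(1)] is_unifier_unf_eqsD[OF assms(1,2) ij(2)] by metis
  then show "map (\<lambda>w. \<theta> (Inr (i, w))) (snd (head_term ms i j)) =
      map (\<lambda>w. \<theta> (Inr (i', w))) (snd (head_term ms i' j'))"
    by simp
qed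

lemma canonical_mgu_mgu:
  assumes "matches_body q ms" "consistent q ms"
  shows "is_mgu (canonical_mgu q ms) (unf_eqs q ms)"
  unfolding is_mgu_def
proof (intro conjI allI impI exI)
  show "is_unifier (canonical_mgu q ms) (unf_eqs q ms)"
    using canonical_mgu_unifier[OF assms] .
  fix \<theta> x assume unif: "is_unifier \<theta> (unf_eqs q ms)"
  have Inr: "\<theta> (Inr y) = \<theta> (Inr (link_rep q ms y))" for y
    using unifier_linked_eq[OF assms(1) unif linked_link_rep] .
  show "\<theta> x = subst \<theta> (canonical_mgu q ms x)"
  proof (cases x)
    case (Inl u)
    show ?thesis
    proof (cases "\<exists>(i, j) \<in> body_positions q. body_var q i j = u")
      case True
      then obtain i j where ij: "(i, j) \<in> body_positions q" "u = body_var q i j"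
        by blast
      obtain i0 j0 where ij0: "occurrence q (body_var q i j) = (i0, j0)"
        by fastforce
      have pos0: "(i0, j0) \<in> body_positions q" "body_var q i0 j0 = u"
        using occurrence[OF ij(1)] ij0 ij(2) by auto
      then have "\<theta> (Inl u) = Fun (fst (head_term ms i0 j0)) (map (\<lambda>w. \<theta> (Inr (i0, w))) (snd (head_term ms i0 j0)))"
        using is_unifier_unf_eqsD[OF assms(1) unif pos0(1)] by simp
      also have "\<dots> = subst \<theta> (canonical_mgu q ms (Inl u))"
        using ij(2) by (simp add: canonical_mgu_Inl[OF ij(1) ij0] Inr[symmetric])
      finally show ?thesis
        using Inl by simp
    qed (simp add: Inl canonical_mgu_def)
  qed (simp add: canonical_mgu_Inr Inr[symmetric])
qed

section \<open>Answers of a tuple of mappings\<close>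

definition views_hold :: "('L, 'f, 'w, 'vw) mapping list \<Rightarrow> ('vw \<Rightarrow> 'c list set) \<Rightarrow> (nat \<Rightarrow> 'w \<Rightarrow> 'c) \<Rightarrow> bool" where
  "views_hold ms ext \<beta> \<longleftrightarrow> (\<forall>i < length ms. map (\<beta> i) (m_args (ms ! i)) \<in> ext (m_view (ms ! i)))"

definition heads_match :: "('L, 'v) cq \<Rightarrow> ('L, 'f, 'w, 'vw) mapping list
    \<Rightarrow> ('v \<Rightarrow> ('f, 'c) gtrm) \<Rightarrow> (nat \<Rightarrow> 'w \<Rightarrow> 'c) \<Rightarrow> bool" where
  "heads_match q ms T \<beta> \<longleftrightarrow> (\<forall>(i, j) \<in> body_positions q.
     T (body_var q i j) = App (fst (head_term ms i j)) (map (Cst \<circ> \<beta> i) (snd (head_term ms i j))))"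

(* The answers contributed by a tuple of mappings, described without unifiers: \<beta> i instantiates the
   variables of the i-th mapping by a tuple of its view. *)
definition tuple_answers :: "('L, 'v) cq \<Rightarrow> ('L, 'f, 'w, 'vw) mapping list \<Rightarrow> ('vw \<Rightarrow> 'c list set)
    \<Rightarrow> ('f, 'c) gtrm list set" where
  "tuple_answers q ms ext = {map T (cq_head q) | T \<beta>. views_hold ms ext \<beta> \<and> heads_match q ms T \<beta>}"

lemma heads_matchD:
  "heads_match q ms T \<beta> \<Longrightarrow> (i, j) \<in> body_positions q \<Longrightarrow>
    T (body_var q i j) = App (fst (head_term ms i j)) (map (Cst \<circ> \<beta> i) (snd (head_term ms i j)))"
  unfolding heads_match_def by blast

lemma heads_match_same_var:
  assumes "heads_match q ms T \<beta>" "(i, j) \<in> body_positions q" "(i', j') \<in> body_positions q"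
    "body_var q i j = body_var q i' j'"
  shows "fst (head_term ms i j) = fst (head_term ms i' j')"
    "map (\<beta> i) (snd (head_term ms i j)) = map (\<beta> i') (snd (head_term ms i' j'))"
proof -
  have "App (fst (head_term ms i j)) (map (Cst \<circ> \<beta> i) (snd (head_term ms i j))) =
      App (fst (head_term ms i' j')) (map (Cst \<circ> \<beta> i') (snd (head_term ms i' j')))"
    using heads_matchD[OF assms(1,2)] heads_matchD[OF assms(1,3)] assms(4) by metis
  then show "fst (head_term ms i j) = fst (head_term ms i' j')"
      "map (\<beta> i) (snd (head_term ms i j)) = map (\<beta> i') (snd (head_term ms i' j'))"
    by (auto intro: map_App_Cst_inject)
qed

lemma heads_match_consistent: "heads_match q ms T \<beta> \<Longrightarrow> consistent q ms"
  unfolding consistent_def by (auto dest: heads_match_same_var map_eq_imp_length_eq)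

lemma heads_match_linked_eq:
  assumes "heads_match q ms T \<beta>" "(linked q ms)\<^sup>*\<^sup>* x y"
  shows "\<beta> (fst x) (snd x) = \<beta> (fst y) (snd y)"
  using linked_rtranclp_eq[OF _ assms(2), where f = "\<lambda>(i, w). \<beta> i w"] heads_match_same_var[OF assms(1)]
  by (auto simp: case_prod_beta)

lemma mem_eval_mk_rule:
  "a \<in> eval_rule ext (mk_rule q ms \<sigma>) \<longleftrightarrow> (\<exists>\<alpha>. a = map (\<lambda>v. gval \<alpha> (\<sigma> (Inl v))) (cq_head q) \<and>
     (\<forall>i < length ms. map (\<lambda>w. gval \<alpha> (\<sigma> (Inr (i, w)))) (m_args (ms ! i)) \<in> map Cst ` ext (m_view (ms ! i))))"
  by (auto simp: eval_rule_def mk_rule_def o_def)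

lemma gval_unifier_Inl:
  assumes "matches_body q ms" "is_unifier \<sigma> (unf_eqs q ms)" "(i, j) \<in> body_positions q"
  shows "gval \<alpha> (\<sigma> (Inl (body_var q i j))) =
    App (fst (head_term ms i j)) (map (\<lambda>w. gval \<alpha> (\<sigma> (Inr (i, w)))) (snd (head_term ms i j)))"
  using is_unifier_unf_eqsD[OF assms] by simp

lemma wf_mapping_head_args: "wf_mapping m \<Longrightarrow> h \<in> set (m_head m) \<Longrightarrow> set (snd h) \<subseteq> set (m_args m)"
  unfolding wf_mapping_def by (cases h) auto

lemma head_term_args:
  assumes "matches_body q ms" "\<forall>m \<in> set ms. wf_mapping m" "(i, j) \<in> body_positions q"
  shows "set (snd (head_term ms i j)) \<subseteq> set (m_args (ms ! i))"
  using body_positions_head_term[OF assms(1,3)] assms(2) by (intro wf_mapping_head_args) auto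

(* Only applied to constants; the App case is junk. *)
primrec cst_of :: "('f, 'c) gtrm \<Rightarrow> 'c" where
  "cst_of (Cst c) = c"
| "cst_of (App f ts) = undefined"

lemma map_eq_map_Cst:
  assumes "map f xs = map Cst cs"
  shows "map (cst_of \<circ> f) xs = cs" "x \<in> set xs \<Longrightarrow> f x = Cst (cst_of (f x))"
  using assms by (induct xs arbitrary: cs) (auto simp: Cons_eq_map_conv)

lemma eval_mk_rule_subset_tuple_answers:
  assumes "matches_body q ms" "\<forall>m \<in> set ms. wf_mapping m" "is_unifier \<sigma> (unf_eqs q ms)"
  shows "eval_rule ext (mk_rule q ms \<sigma>) \<subseteq> tuple_answers q ms ext"
proof
  fix a assume "a \<in> eval_rule ext (mk_rule q ms \<sigma>)"
  then obtain \<alpha> where a: "a = map (\<lambda>v. gval \<alpha> (\<sigma> (Inl v))) (cq_head q)"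
    and views: "\<forall>i < length ms. map (\<lambda>w. gval \<alpha> (\<sigma> (Inr (i, w)))) (m_args (ms ! i)) \<in> map Cst ` ext (m_view (ms ! i))"
    unfolding mem_eval_mk_rule by blast
  define \<beta> where "\<beta> i w = cst_of (gval \<alpha> (\<sigma> (Inr (i, w))))" for i w
  have "views_hold ms ext \<beta>"
    unfolding views_hold_def
  proof clarify
    fix i assume "i < length ms"
    then obtain cs where "cs \<in> ext (m_view (ms ! i))"
        "map (\<lambda>w. gval \<alpha> (\<sigma> (Inr (i, w)))) (m_args (ms ! i)) = map Cst cs"
      using views by blast
    then show "map (\<beta> i) (m_args (ms ! i)) \<in> ext (m_view (ms ! i))"
      using map_eq_map_Cst(1) unfolding \<beta>_def o_def by metis
  qed
  moreover have "heads_match q ms (\<lambda>v. gval \<alpha> (\<sigma> (Inl v))) \<beta>"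
    unfolding heads_match_def
  proof clarify
    fix i j assume ij: "(i, j) \<in> body_positions q"
    note i = body_positions_head_term[OF assms(1) ij]
    obtain cs where cs: "map (\<lambda>w. gval \<alpha> (\<sigma> (Inr (i, w)))) (m_args (ms ! i)) = map Cst cs"
      using views i(1) by blast
    have "gval \<alpha> (\<sigma> (Inr (i, w))) = Cst (\<beta> i w)" if "w \<in> set (snd (head_term ms i j))" for w
      using map_eq_map_Cst(2)[OF cs] head_term_args[OF assms(1,2) ij] that
      unfolding \<beta>_def by blast
    then show "gval \<alpha> (\<sigma> (Inl (body_var q i j))) =
        App (fst (head_term ms i j)) (map (Cst \<circ> \<beta> i) (snd (head_term ms i j)))"
      using gval_unifier_Inl[OF assms(1,3) ij, of \<alpha>] by (simp add: o_def)
  qed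
  ultimately show "a \<in> tuple_answers q ms ext"
    unfolding tuple_answers_def a by blast
qed

(* The canonical mgu factors through \<sigma> and sends mapping variables to variables, so \<sigma> does too;
   \<beta> is constant on the linkage classes that \<sigma> may merge. *)
lemma mgu_Inr_valuation:
  assumes "matches_body q ms" "heads_match q ms T \<beta>" "is_mgu \<sigma> (unf_eqs q ms)"
  obtains \<alpha> where "\<And>i w. gval \<alpha> (\<sigma> (Inr (i, w))) = Cst (\<beta> i w)"
proof -
  obtain \<delta> where \<delta>: "\<And>x. canonical_mgu q ms x = subst \<delta> (\<sigma> x)"
    using assms(3) canonical_mgu_unifier[OF assms(1) heads_match_consistent[OF assms(2)]]
    unfolding is_mgu_def by blast
  define \<alpha> where "\<alpha> y = (case \<delta> y of Var (Inr x) \<Rightarrow> \<beta> (fst x) (snd x) | _ \<Rightarrow> undefined)" for y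
  have "gval \<alpha> (\<sigma> (Inr (i, w))) = Cst (\<beta> i w)" for i w
  proof -
    have subst: "subst \<delta> (\<sigma> (Inr (i, w))) = Var (Inr (link_rep q ms (i, w)))"
      using \<delta>[of "Inr (i, w)"] by (simp add: canonical_mgu_Inr)
    then obtain y where "\<sigma> (Inr (i, w)) = Var y"
      by (cases "\<sigma> (Inr (i, w))") auto
    then have "gval \<alpha> (\<sigma> (Inr (i, w))) = Cst (\<beta> (fst (link_rep q ms (i, w))) (snd (link_rep q ms (i, w))))"
      using subst by (simp add: \<alpha>_def)
    also have "\<dots> = Cst (\<beta> i w)"
      using heads_match_linked_eq[OF assms(2) linked_link_rep[of q ms "(i, w)"]] by simp
    finally show ?thesis .
  qed
  then show ?thesis
    by (rule that)
qed

lemma tuple_answers_subset_eval_mk_rule: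
  assumes "matches_body q ms" "safe_cq q" "is_mgu \<sigma> (unf_eqs q ms)"
  shows "tuple_answers q ms ext \<subseteq> eval_rule ext (mk_rule q ms \<sigma>)"
proof
  fix a assume "a \<in> tuple_answers q ms ext"
  then obtain T \<beta> where a: "a = map T (cq_head q)"
    and views: "views_hold ms ext \<beta>" and heads: "heads_match q ms T \<beta>"
    unfolding tuple_answers_def by blast
  obtain \<alpha> where \<alpha>: "\<And>i w. gval \<alpha> (\<sigma> (Inr (i, w))) = Cst (\<beta> i w)"
    using mgu_Inr_valuation[OF assms(1) heads assms(3)] by blast
  have unif: "is_unifier \<sigma> (unf_eqs q ms)"
    using assms(3) unfolding is_mgu_def by blast
  have "gval \<alpha> (\<sigma> (Inl v)) = T v" if v: "v \<in> set (cq_head q)" for v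
  proof -
    obtain i j where ij: "(i, j) \<in> body_positions q" "body_var q i j = v"
      using body_var_in_body_positions[OF assms(2) v] by blast
    show ?thesis
      using gval_unifier_Inl[OF assms(1) unif ij(1), of \<alpha>] heads_matchD[OF heads ij(1)] ij(2) \<alpha>
      by (simp add: o_def)
  qed
  then have "a = map (\<lambda>v. gval \<alpha> (\<sigma> (Inl v))) (cq_head q)"
    unfolding a by simp
  moreover have "\<forall>i < length ms.
      map (\<lambda>w. gval \<alpha> (\<sigma> (Inr (i, w)))) (m_args (ms ! i)) \<in> map Cst ` ext (m_view (ms ! i))"
  proof (intro allI impI)
    fix i assume "i < length ms"
    then have "map Cst (map (\<beta> i) (m_args (ms ! i))) \<in> map Cst ` ext (m_view (ms ! i))"
      using views unfolding views_hold_def by blast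
    then show "map (\<lambda>w. gval \<alpha> (\<sigma> (Inr (i, w)))) (m_args (ms ! i)) \<in> map Cst ` ext (m_view (ms ! i))"
      by (simp add: \<alpha> o_def)
  qed
  ultimately show "a \<in> eval_rule ext (mk_rule q ms \<sigma>)"
    unfolding mem_eval_mk_rule by blast
qed

lemma eval_mk_rule_eq_tuple_answers:
  assumes "matches_body q ms" "\<forall>m \<in> set ms. wf_mapping m" "safe_cq q" "is_mgu \<sigma> (unf_eqs q ms)"
  shows "eval_rule ext (mk_rule q ms \<sigma>) = tuple_answers q ms ext"
  using eval_mk_rule_subset_tuple_answers[OF assms(1,2)] tuple_answers_subset_eval_mk_rule[OF assms(1,3,4)]
    assms(4) unfolding is_mgu_def by blast

definition body_tuples :: "('L, 'v) cq \<Rightarrow> ('L, 'f, 'w, 'vw) mapping set \<Rightarrow> ('L, 'f, 'w, 'vw) mapping list set" where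
  "body_tuples q M = {ms. matches_body q ms \<and> set ms \<subseteq> M}"

lemma finite_body_tuples: "finite M \<Longrightarrow> finite (body_tuples q M)"
  unfolding body_tuples_def matches_body_def
  by (rule finite_subset[OF _ finite_lists_length_eq[of M "length (cq_body q)"]]) auto

lemma tuple_answers_consistent: "a \<in> tuple_answers q ms ext \<Longrightarrow> consistent q ms"
  unfolding tuple_answers_def by (auto intro: heads_match_consistent)

lemma unf_answers_eq_tuple_answers:
  assumes "\<forall>m \<in> M. wf_mapping m" "safe_cq q"
  shows "unf_answers q M ext = (\<Union>ms \<in> body_tuples q M. tuple_answers q ms ext)"
proof
  show "unf_answers q M ext \<subseteq> (\<Union>ms \<in> body_tuples q M. tuple_answers q ms ext)"
    unfolding unf_answers_def
  proof (rule UN_least)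
    fix r assume "r \<in> unf_rules q M"
    then obtain ms \<sigma> where r: "r = mk_rule q ms \<sigma>" "matches_body q ms" "set ms \<subseteq> M"
        "is_mgu \<sigma> (unf_eqs q ms)"
      unfolding unf_rules_iff by blast
    then have "eval_rule ext r = tuple_answers q ms ext"
      using eval_mk_rule_eq_tuple_answers[of q ms] assms by blast
    then show "eval_rule ext r \<subseteq> (\<Union>ms \<in> body_tuples q M. tuple_answers q ms ext)"
      using r(2,3) unfolding body_tuples_def by blast
  qed
next
  show "(\<Union>ms \<in> body_tuples q M. tuple_answers q ms ext) \<subseteq> unf_answers q M ext"
  proof clarify
    fix ms a assume ms: "ms \<in> body_tuples q M" and a: "a \<in> tuple_answers q ms ext"
    then have body: "matches_body q ms" "set ms \<subseteq> M"
      unfolding body_tuples_def by auto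
    then have mgu: "is_mgu (canonical_mgu q ms) (unf_eqs q ms)"
      using canonical_mgu_mgu tuple_answers_consistent[OF a] by blast
    then have "mk_rule q ms (canonical_mgu q ms) \<in> unf_rules q M"
      unfolding unf_rules_iff using body by blast
    moreover have "a \<in> eval_rule ext (mk_rule q ms (canonical_mgu q ms))"
      using a body assms eval_mk_rule_eq_tuple_answers[OF body(1) _ assms(2) mgu] by blast
    ultimately show "a \<in> unf_answers q M ext"
      unfolding unf_answers_def by blast
  qed
qed

section \<open>Finiteness\<close>

definition range_restricted :: "('vw, 'f, 'x) rule \<Rightarrow> bool" where
  "range_restricted r \<longleftrightarrow>
    (\<Union>t \<in> set (r_head r). term_vars t) \<subseteq> (\<Union>(V, ts) \<in> set (r_body r). \<Union>t \<in> set ts. term_vars t)"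

lemma finite_eval_rule:
  assumes "\<forall>V. finite (ext V)" "range_restricted r"
  shows "finite (eval_rule ext r)"
proof -
  define X where "X = (\<Union>(V, ts) \<in> set (r_body r). \<Union>t \<in> set ts. term_vars t)"
  define K where "K = (\<Union>(V, ts) \<in> set (r_body r). \<Union>cs \<in> ext V. set cs)"
  define G where "G = {g. \<forall>x. (x \<in> X \<longrightarrow> g x \<in> K) \<and> (x \<notin> X \<longrightarrow> g x = undefined)}"
  have "finite G"
    unfolding G_def X_def K_def using assms(1)
    by (intro finite_set_of_finite_funs) (auto simp: finite_term_vars)
  moreover have "eval_rule ext r \<subseteq> (\<lambda>g. map (gval g) (r_head r)) ` G"
  proof
    fix a assume "a \<in> eval_rule ext r"
    then obtain \<alpha> where a: "a = map (gval \<alpha>) (r_head r)"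
      and body: "\<forall>(V, ts) \<in> set (r_body r). map (gval \<alpha>) ts \<in> map Cst ` ext V"
      unfolding eval_rule_def by blast
    define g where "g x = (if x \<in> X then \<alpha> x else undefined)" for x
    have "\<alpha> x \<in> K" if x: "x \<in> X" for x
    proof -
      obtain V ts t where Vt: "(V, ts) \<in> set (r_body r)" "t \<in> set ts" "x \<in> term_vars t"
        using x unfolding X_def by blast
      then obtain cs where cs: "cs \<in> ext V" "map (gval \<alpha>) ts = map Cst cs"
        using body by blast
      then have "gval \<alpha> t \<in> Cst ` set cs"
        using Vt(2) by (metis image_eqI list.set_map)
      then have "t = Var x" "\<alpha> x \<in> set cs"
        using Vt(3) by (cases t; auto)+
      then show ?thesis
        unfolding K_def using Vt(1) cs(1) by blast
    qed
    then have "g \<in> G"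
      unfolding G_def g_def by auto
    moreover have "a = map (gval g) (r_head r)"
      unfolding a using assms(2) unfolding range_restricted_def X_def[symmetric]
      by (auto intro!: gval_cong simp: g_def)
    ultimately show "a \<in> (\<lambda>g. map (gval g) (r_head r)) ` G"
      by blast
  qed
  ultimately show ?thesis
    by (rule finite_surj)
qed

lemma range_restricted_mk_rule:
  assumes "matches_body q ms" "\<forall>m \<in> set ms. wf_mapping m" "safe_cq q" "is_unifier \<sigma> (unf_eqs q ms)"
  shows "range_restricted (mk_rule q ms \<sigma>)"
  unfolding range_restricted_def
proof
  fix x assume "x \<in> (\<Union>t \<in> set (r_head (mk_rule q ms \<sigma>)). term_vars t)"
  then obtain v where v: "v \<in> set (cq_head q)" "x \<in> term_vars (\<sigma> (Inl v))"
    by (auto simp: mk_rule_def)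
  obtain i j where ij: "(i, j) \<in> body_positions q" "body_var q i j = v"
    using body_var_in_body_positions[OF assms(3) v(1)] by blast
  note i = body_positions_head_term[OF assms(1) ij(1)]
  obtain w where w: "w \<in> set (snd (head_term ms i j))" "x \<in> term_vars (\<sigma> (Inr (i, w)))"
    using v(2) ij(2) is_unifier_unf_eqsD[OF assms(1,4) ij(1)] by auto
  have "w \<in> set (m_args (ms ! i))"
    using head_term_args[OF assms(1,2) ij(1)] w(1) by blast
  moreover have "(m_view (ms ! i), map (\<lambda>w. \<sigma> (Inr (i, w))) (m_args (ms ! i))) \<in> set (r_body (mk_rule q ms \<sigma>))"
    using i(1) by (simp add: mk_rule_def)
  ultimately show "x \<in> (\<Union>(V, ts) \<in> set (r_body (mk_rule q ms \<sigma>)). \<Union>t \<in> set ts. term_vars t)"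
    using w(2) by (intro UN_I[of "(m_view (ms ! i), map (\<lambda>w. \<sigma> (Inr (i, w))) (m_args (ms ! i)))"]) auto
qed

lemma finite_tuple_answers:
  assumes "matches_body q ms" "\<forall>m \<in> set ms. wf_mapping m" "safe_cq q" "\<forall>V. finite (ext V)"
  shows "finite (tuple_answers q ms ext)"
proof (cases "tuple_answers q ms ext = {}")
  case False
  then have mgu: "is_mgu (canonical_mgu q ms) (unf_eqs q ms)"
    using canonical_mgu_mgu[OF assms(1)] tuple_answers_consistent by blast
  then have "range_restricted (mk_rule q ms (canonical_mgu q ms))"
    using range_restricted_mk_rule[OF assms(1-3)] unfolding is_mgu_def by blast
  then have "finite (eval_rule ext (mk_rule q ms (canonical_mgu q ms)))"
    by (rule finite_eval_rule[OF assms(4)])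
  then show ?thesis
    by (simp add: eval_mk_rule_eq_tuple_answers[OF assms(1-3) mgu])
qed simp

lemma finite_unf_answers:
  assumes "finite M" "\<forall>m \<in> M. wf_mapping m" "safe_cq q" "\<forall>V. finite (ext V)"
  shows "finite (unf_answers q M ext)"
  unfolding unf_answers_eq_tuple_answers[OF assms(2,3)]
proof (rule finite_UN_I[OF finite_body_tuples[OF assms(1)]])
  fix ms assume "ms \<in> body_tuples q M"
  then show "finite (tuple_answers q ms ext)"
    using assms(2-4) by (intro finite_tuple_answers) (auto simp: body_tuples_def)
qed

section \<open>Wrapping\<close>

abbreviation head_sig :: "('f \<times> 'w list) list \<Rightarrow> ('f \<times> nat) list" where
  "head_sig H \<equiv> map (\<lambda>(g, ys). (g, length ys)) H"

(* The tuples that wrap_ext stores in the fresh view of a signature. *)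
abbreviation head_values :: "('w \<Rightarrow> 'c) \<Rightarrow> ('f \<times> 'w list) list \<Rightarrow> 'c list" where
  "head_values \<alpha> H \<equiv> concat (map (\<lambda>(g, ys). map \<alpha> ys) H)"

lemma length_head_values: "length (head_values \<alpha> H) = sum_list (map snd (head_sig H))"
  by (induct H) auto

lemma length_mk_terms: "length (mk_terms k s) = length s"
  by (induct k s rule: mk_terms.induct) auto

lemma map_fst_mk_terms: "map fst (mk_terms k s) = map fst s"
  by (induct k s rule: mk_terms.induct) auto

lemma mk_terms_vars: "h \<in> set (mk_terms k s) \<Longrightarrow> set (snd h) \<subseteq> {k..<k + sum_list (map snd s)}"
  by (induct k s rule: mk_terms.induct) fastforce+

lemma mk_terms_head_values:
  assumes "j < length H"
  shows "map (\<lambda>n. head_values \<alpha> H ! (n - k)) (snd (mk_terms k (head_sig H) ! j)) = map \<alpha> (snd (H ! j))"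
  using assms
proof (induct H arbitrary: k j)
  case (Cons h H)
  obtain g ys where h: "h = (g, ys)"
    by fastforce
  show ?case
  proof (cases j)
    case 0
    then show ?thesis
      using h by (auto intro!: nth_equalityI simp: nth_append)
  next
    case (Suc j')
    have j': "j' < length H"
      using Cons.prems Suc by simp
    have "mk_terms (k + length ys) (head_sig H) ! j' \<in> set (mk_terms (k + length ys) (head_sig H))"
      using j' by (simp add: length_mk_terms)
    from mk_terms_vars[OF this]
    have "\<forall>n \<in> set (snd (mk_terms (k + length ys) (head_sig H) ! j')). k + length ys \<le> n"
      by auto
    then have "map (\<lambda>n. head_values \<alpha> (h # H) ! (n - k)) (snd (mk_terms k (head_sig (h # H)) ! j)) =
        map (\<lambda>n. head_values \<alpha> H ! (n - (k + length ys))) (snd (mk_terms (k + length ys) (head_sig H) ! j'))"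
      using h Suc by (intro map_cong) (auto simp: nth_append)
    then show ?thesis
      using Cons.hyps[OF j'] Suc by simp
  qed
qed simp

lemma wmap_simps:
  "m_pred (wmap s) = fst s" "m_head (wmap s) = mk_terms 0 (snd s)" "m_view (wmap s) = s"
  "m_args (wmap s) = [0..<sum_list (map snd (snd s))]"
  by (simp_all add: wmap_def)

lemma msig_simps: "fst (msig m) = m_pred m" "snd (msig m) = head_sig (m_head m)"
  by (simp_all add: msig_def)

lemma wf_mapping_wmap: "wf_mapping (wmap s)"
  unfolding wf_mapping_def wmap_simps using mk_terms_vars[where k = 0] by fastforce

lemma wf_mapping_wrap: "\<forall>m \<in> wrap M. wf_mapping m"
  unfolding wrap_def using wf_mapping_wmap by blast

lemma matches_body_wrap_iff: "matches_body q (map (\<lambda>m. wmap (msig m)) ms) \<longleftrightarrow> matches_body q ms"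
  unfolding matches_body_def by (simp add: wmap_simps msig_simps length_mk_terms)

lemma wmap_head_term:
  assumes "map \<beta>' (m_args (wmap (msig m))) = head_values \<beta> (m_head m)" "j < length (m_head m)"
  shows "fst (m_head (wmap (msig m)) ! j) = fst (m_head m ! j)"
    "map \<beta>' (snd (m_head (wmap (msig m)) ! j)) = map \<beta> (snd (m_head m ! j))"
proof -
  show "fst (m_head (wmap (msig m)) ! j) = fst (m_head m ! j)"
    using arg_cong[OF map_fst_mk_terms, of "\<lambda>xs. xs ! j" 0 "head_sig (m_head m)"] assms(2)
    by (simp add: wmap_simps msig_simps case_prod_beta length_mk_terms)
  have args: "map \<beta>' [0..<length (head_values \<beta> (m_head m))] = head_values \<beta> (m_head m)"
    using assms(1) unfolding wmap_simps(4) msig_simps(2) length_head_values .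
  have \<beta>': "\<beta>' n = head_values \<beta> (m_head m) ! n" if "n < length (head_values \<beta> (m_head m))" for n
    using that arg_cong[OF args, of "\<lambda>xs. xs ! n"] by simp
  have "mk_terms 0 (head_sig (m_head m)) ! j \<in> set (mk_terms 0 (head_sig (m_head m)))"
    using assms(2) by (simp add: length_mk_terms)
  from mk_terms_vars[OF this]
  have "set (snd (mk_terms 0 (head_sig (m_head m)) ! j)) \<subseteq> {0..<length (head_values \<beta> (m_head m))}"
    unfolding length_head_values by simp
  then have "map \<beta>' (snd (m_head (wmap (msig m)) ! j)) =
      map (\<lambda>n. head_values \<beta> (m_head m) ! (n - 0)) (snd (mk_terms 0 (head_sig (m_head m)) ! j))"
    by (auto simp: \<beta>' wmap_simps msig_simps)
  also have "\<dots> = map \<beta> (snd (m_head m ! j))"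
    by (rule mk_terms_head_values[OF assms(2)])
  finally show "map \<beta>' (snd (m_head (wmap (msig m)) ! j)) = map \<beta> (snd (m_head m ! j))" .
qed

lemma heads_match_wrap_iff:
  assumes "matches_body q ms"
    and "\<forall>i < length ms. map (\<beta>' i) (m_args (wmap (msig (ms ! i)))) = head_values (\<beta> i) (m_head (ms ! i))"
  shows "heads_match q (map (\<lambda>m. wmap (msig m)) ms) T \<beta>' \<longleftrightarrow> heads_match q ms T \<beta>"
proof -
  have "App (fst (head_term (map (\<lambda>m. wmap (msig m)) ms) i j))
        (map (Cst \<circ> \<beta>' i) (snd (head_term (map (\<lambda>m. wmap (msig m)) ms) i j))) =
      App (fst (head_term ms i j)) (map (Cst \<circ> \<beta> i) (snd (head_term ms i j)))"
    if ij: "(i, j) \<in> body_positions q" for i j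
  proof -
    have i: "i < length ms" "j < length (m_head (ms ! i))"
      using assms(1) ij unfolding matches_body_def body_positions_def by auto
    show ?thesis
      using wmap_head_term[OF assms(2)[rule_format, OF i(1)] i(2)] i(1)
      by (simp flip: map_map)
  qed
  then show ?thesis
    unfolding heads_match_def by (auto split: prod.splits)
qed

lemma tuple_answers_subset_wrap:
  assumes "ms \<in> body_tuples q M"
  shows "tuple_answers q ms ext \<subseteq> tuple_answers q (map (\<lambda>m. wmap (msig m)) ms) (wrap_ext M ext)"
proof
  fix a assume "a \<in> tuple_answers q ms ext"
  then obtain T \<beta> where a: "a = map T (cq_head q)"
    and views: "views_hold ms ext \<beta>" and heads: "heads_match q ms T \<beta>"
    unfolding tuple_answers_def by blast
  define \<beta>' where "\<beta>' i n = head_values (\<beta> i) (m_head (ms ! i)) ! n" for i n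
  have args: "map (\<beta>' i) (m_args (wmap (msig (ms ! i)))) = head_values (\<beta> i) (m_head (ms ! i))" for i
    unfolding \<beta>'_def wmap_simps(4) msig_simps(2) length_head_values[of "\<beta> i", symmetric]
    by (rule map_nth)
  have "views_hold (map (\<lambda>m. wmap (msig m)) ms) (wrap_ext M ext) \<beta>'"
    unfolding views_hold_def
  proof clarify
    fix i assume "i < length (map (\<lambda>m. wmap (msig m)) ms)"
    then have "i < length ms" "ms ! i \<in> M"
      using assms unfolding body_tuples_def by auto
    then show "map (\<beta>' i) (m_args (map (\<lambda>m. wmap (msig m)) ms ! i))
        \<in> wrap_ext M ext (m_view (map (\<lambda>m. wmap (msig m)) ms ! i))"
      using views args[of i] unfolding views_hold_def wrap_ext_def by (auto simp: wmap_simps)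
  qed
  moreover have "heads_match q (map (\<lambda>m. wmap (msig m)) ms) T \<beta>'"
    using heads heads_match_wrap_iff[of q ms \<beta>' \<beta>] args assms unfolding body_tuples_def by blast
  ultimately show "a \<in> tuple_answers q (map (\<lambda>m. wmap (msig m)) ms) (wrap_ext M ext)"
    unfolding tuple_answers_def a by blast
qed

lemma mem_wrap_ext_unwrap:
  assumes "w \<in> wrap M" "cs \<in> wrap_ext M ext (m_view w)"
  obtains m \<alpha> where "m \<in> M" "w = wmap (msig m)" "map \<alpha> (m_args m) \<in> ext (m_view m)"
    "cs = head_values \<alpha> (m_head m)"
proof -
  obtain m0 where m0: "m0 \<in> M" "w = wmap (msig m0)"
    using assms(1) unfolding wrap_def by blast
  then have "cs \<in> wrap_ext M ext (msig m0)"
    using assms(2) by (simp only: wmap_simps(3))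
  then obtain m \<alpha> where "m \<in> M" "msig m = msig m0" "map \<alpha> (m_args m) \<in> ext (m_view m)"
      "cs = head_values \<alpha> (m_head m)"
    unfolding wrap_ext_def by blast
  then show ?thesis
    using that m0(2) by simp
qed

lemma views_hold_unwrap:
  assumes "set ws \<subseteq> wrap M" "views_hold ws (wrap_ext M ext) \<beta>'"
  obtains ms \<beta> where "set ms \<subseteq> M" "ws = map (\<lambda>m. wmap (msig m)) ms" "views_hold ms ext \<beta>"
    "\<forall>i < length ms. map (\<beta>' i) (m_args (wmap (msig (ms ! i)))) = head_values (\<beta> i) (m_head (ms ! i))"
proof -
  have "\<forall>i \<in> {..<length ws}. \<exists>p. fst p \<in> M \<and> ws ! i = wmap (msig (fst p)) \<and>
      map (snd p) (m_args (fst p)) \<in> ext (m_view (fst p)) \<and>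
      map (\<beta>' i) (m_args (ws ! i)) = head_values (snd p) (m_head (fst p))"
  proof
    fix i assume "i \<in> {..<length ws}"
    then have "ws ! i \<in> wrap M" "map (\<beta>' i) (m_args (ws ! i)) \<in> wrap_ext M ext (m_view (ws ! i))"
      using assms unfolding views_hold_def by auto
    then obtain m \<alpha> where "m \<in> M" "ws ! i = wmap (msig m)" "map \<alpha> (m_args m) \<in> ext (m_view m)"
        "map (\<beta>' i) (m_args (ws ! i)) = head_values \<alpha> (m_head m)"
      by (rule mem_wrap_ext_unwrap)
    then show "\<exists>p. fst p \<in> M \<and> ws ! i = wmap (msig (fst p)) \<and>
        map (snd p) (m_args (fst p)) \<in> ext (m_view (fst p)) \<and>
        map (\<beta>' i) (m_args (ws ! i)) = head_values (snd p) (m_head (fst p))"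
      by (intro exI[of _ "(m, \<alpha>)"]) simp
  qed
  from bchoice[OF this] obtain F where F: "\<forall>i \<in> {..<length ws}. fst (F i) \<in> M \<and> ws ! i = wmap (msig (fst (F i))) \<and>
      map (snd (F i)) (m_args (fst (F i))) \<in> ext (m_view (fst (F i))) \<and>
      map (\<beta>' i) (m_args (ws ! i)) = head_values (snd (F i)) (m_head (fst (F i)))"
    by blast
  define ms where "ms = map (\<lambda>i. fst (F i)) [0..<length ws]"
  have ms_nth: "ms ! i \<in> M" "ws ! i = wmap (msig (ms ! i))"
      "map (snd (F i)) (m_args (ms ! i)) \<in> ext (m_view (ms ! i))"
      "map (\<beta>' i) (m_args (wmap (msig (ms ! i)))) = head_values (snd (F i)) (m_head (ms ! i))"
    if "i < length ms" for i
  proof -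
    have i: "i \<in> {..<length ws}"
      using that unfolding ms_def by simp
    moreover have "ms ! i = fst (F i)"
      using i by (simp add: ms_def)
    ultimately show "ms ! i \<in> M" "ws ! i = wmap (msig (ms ! i))"
        "map (snd (F i)) (m_args (ms ! i)) \<in> ext (m_view (ms ! i))"
        "map (\<beta>' i) (m_args (wmap (msig (ms ! i)))) = head_values (snd (F i)) (m_head (ms ! i))"
      using bspec[OF F i] by auto
  qed
  have "length ms = length ws"
    unfolding ms_def by simp
  then have "ws = map (\<lambda>m. wmap (msig m)) ms"
    using ms_nth(2) by (simp add: list_eq_iff_nth_eq)
  moreover have "set ms \<subseteq> M"
    using ms_nth(1) by (auto simp: in_set_conv_nth)
  moreover have "views_hold ms ext (\<lambda>i. snd (F i))"
    using ms_nth(3) unfolding views_hold_def by blast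
  ultimately show ?thesis
    using that ms_nth(4) by blast
qed

lemma tuple_answers_wrap_subset:
  assumes "ws \<in> body_tuples q (wrap M)" "a \<in> tuple_answers q ws (wrap_ext M ext)"
  obtains ms where "ms \<in> body_tuples q M" "a \<in> tuple_answers q ms ext"
proof -
  obtain T \<beta>' where a: "a = map T (cq_head q)"
    and views: "views_hold ws (wrap_ext M ext) \<beta>'" and heads: "heads_match q ws T \<beta>'"
    using assms(2) unfolding tuple_answers_def by blast
  obtain ms \<beta> where ms: "set ms \<subseteq> M" "ws = map (\<lambda>m. wmap (msig m)) ms" "views_hold ms ext \<beta>"
      and args: "\<forall>i < length ms. map (\<beta>' i) (m_args (wmap (msig (ms ! i)))) = head_values (\<beta> i) (m_head (ms ! i))"
    using views_hold_unwrap[OF _ views] assms(1) unfolding body_tuples_def by blast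
  have body: "matches_body q ms"
    using assms(1) unfolding ms(2) body_tuples_def by (simp add: matches_body_wrap_iff)
  then have "heads_match q ms T \<beta>"
    using heads heads_match_wrap_iff[OF body args] unfolding ms(2) by blast
  then show ?thesis
    using that body ms(1,3) unfolding body_tuples_def tuple_answers_def a by blast
qed

lemma unf_answers_wrap:
  assumes "\<forall>m \<in> M. wf_mapping m" "safe_cq q"
  shows "unf_answers q M ext = unf_answers q (wrap M) (wrap_ext M ext)"
proof -
  have "(\<Union>ms \<in> body_tuples q M. tuple_answers q ms ext) =
      (\<Union>ws \<in> body_tuples q (wrap M). tuple_answers q ws (wrap_ext M ext))"
  proof (intro equalityI subsetI)
    fix a assume "a \<in> (\<Union>ms \<in> body_tuples q M. tuple_answers q ms ext)"
    then obtain ms where ms: "ms \<in> body_tuples q M" "a \<in> tuple_answers q ms ext"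
      by blast
    have "map (\<lambda>m. wmap (msig m)) ms \<in> body_tuples q (wrap M)"
      using ms(1) unfolding body_tuples_def wrap_def by (auto simp: matches_body_wrap_iff)
    moreover have "a \<in> tuple_answers q (map (\<lambda>m. wmap (msig m)) ms) (wrap_ext M ext)"
      using tuple_answers_subset_wrap[OF ms(1)] ms(2) ..
    ultimately show "a \<in> (\<Union>ws \<in> body_tuples q (wrap M). tuple_answers q ws (wrap_ext M ext))"
      by blast
  next
    fix a assume "a \<in> (\<Union>ws \<in> body_tuples q (wrap M). tuple_answers q ws (wrap_ext M ext))"
    then obtain ws where "ws \<in> body_tuples q (wrap M)" "a \<in> tuple_answers q ws (wrap_ext M ext)"
      by blast
    then obtain ms where "ms \<in> body_tuples q M" "a \<in> tuple_answers q ms ext"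
      by (rule tuple_answers_wrap_subset)
    then show "a \<in> (\<Union>ms \<in> body_tuples q M. tuple_answers q ms ext)"
      by blast
  qed
  then show ?thesis
    unfolding unf_answers_eq_tuple_answers[OF assms] unf_answers_eq_tuple_answers[OF wf_mapping_wrap assms(2)] .
qed

section \<open>Renaming classes and the answer template matrix\<close>

lemma rename_rel_refl: "r \<in> R \<Longrightarrow> (r, r) \<in> rename_rel R"
  unfolding rename_rel_def using rename_rule_id[of r] bij_id by blast

lemma rename_relD: "(r, r') \<in> rename_rel R \<Longrightarrow> r' \<in> R \<and> (\<exists>\<rho>. bij \<rho> \<and> rename_rule \<rho> r = r')"
  unfolding rename_rel_def by auto

lemma rule_rep_rename_class:
  assumes "r \<in> R"
  shows "rule_rep (rename_rel R `` {r}) \<in> R"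
    "eval_rule ext (rule_rep (rename_rel R `` {r})) = eval_rule ext r"
proof -
  define C where "C = rename_rel R `` {r}"
  have "r \<in> C"
    using rename_rel_refl[OF assms] unfolding C_def by simp
  then have "rule_rep C \<in> C"
    unfolding rule_rep_def by (rule someI)
  then have "(r, rule_rep C) \<in> rename_rel R"
    unfolding C_def by simp
  then obtain \<rho> where "rule_rep C \<in> R" "bij \<rho>" "rename_rule \<rho> r = rule_rep C"
    using rename_relD by blast
  then show "rule_rep C \<in> R" "eval_rule ext (rule_rep C) = eval_rule ext r"
    using eval_rule_rename_rule by metis+
qed

lemma rule_rep_quotient: "C \<in> R // rename_rel R \<Longrightarrow> rule_rep C \<in> R"
  unfolding quotient_def using rule_rep_rename_class(1) by blast

lemma UN_eval_rule_rep:
  "(\<Union>C \<in> R // rename_rel R. eval_rule ext (rule_rep C)) = (\<Union>r \<in> R. eval_rule ext r)"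
  unfolding quotient_def using rule_rep_rename_class(2)[of _ R ext] by auto

lemma atm_row_eval_rule: "a \<in> eval_rule ext r \<Longrightarrow> map gtrm_head a = atm_row r"
  unfolding eval_rule_def atm_row_def by (auto simp: gtrm_head_gval)

lemma eval_rule_rep_disjoint:
  assumes "atm_no_repeated_rows P" "C \<in> P" "C' \<in> P" "C \<noteq> C'"
  shows "eval_rule ext (rule_rep C) \<inter> eval_rule ext (rule_rep C') = {}"
proof (rule equals0I)
  fix a assume "a \<in> eval_rule ext (rule_rep C) \<inter> eval_rule ext (rule_rep C')"
  then have "map gtrm_head a = atm_row (rule_rep C)" "map gtrm_head a = atm_row (rule_rep C')"
    by (auto intro: atm_row_eval_rule)
  then have "C = C'"
    using inj_onD[OF assms(1)[unfolded atm_no_repeated_rows_def] _ assms(2,3)] by simp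
  then show False
    using assms(4) by contradiction
qed

lemma atm_row_unf_rules:
  assumes "safe_cq q" "r \<in> unf_rules q M"
  shows "atm_row r \<in> {xs. set xs \<subseteq> insert None (Some ` (\<Union>m \<in> M. fst ` set (m_head m))) \<and>
      length xs = length (cq_head q)}"
proof -
  obtain ms \<sigma> where r: "r = mk_rule q ms \<sigma>" "matches_body q ms" "set ms \<subseteq> M" "is_mgu \<sigma> (unf_eqs q ms)"
    using assms(2) unfolding unf_rules_iff by blast
  have "head_sym (\<sigma> (Inl v)) \<in> Some ` (\<Union>m \<in> M. fst ` set (m_head m))" if v: "v \<in> set (cq_head q)" for v
  proof -
    obtain i j where ij: "(i, j) \<in> body_positions q" "body_var q i j = v"
      using body_var_in_body_positions[OF assms(1) v] by blast
    note i = body_positions_head_term[OF r(2) ij(1)]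
    have "\<sigma> (Inl v) = Fun (fst (head_term ms i j)) (map (\<lambda>w. \<sigma> (Inr (i, w))) (snd (head_term ms i j)))"
      using is_unifier_unf_eqsD[OF r(2) _ ij(1)] r(4) ij(2) unfolding is_mgu_def by blast
    moreover have "ms ! i \<in> M"
      using r(3) i(1) by auto
    ultimately show ?thesis
      using i(2) by auto
  qed
  then show ?thesis
    unfolding r(1) atm_row_def by (auto simp: mk_rule_def)
qed

lemma finite_unf_program:
  assumes "finite M" "safe_cq q" "atm_no_repeated_rows (unf_program q M)"
  shows "finite (unf_program q M)"
proof (rule finite_imageD)
  show "inj_on (\<lambda>C. atm_row (rule_rep C)) (unf_program q M)"
    using assms(3) unfolding atm_no_repeated_rows_def .
  have "finite (insert None (Some ` (\<Union>m \<in> M. fst ` set (m_head m))))"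
    using assms(1) by auto
  then show "finite ((\<lambda>C. atm_row (rule_rep C)) ` unf_program q M)"
    using atm_row_unf_rules[OF assms(2) rule_rep_quotient] unfolding unf_program_def
    by (blast intro: finite_subset[OF _ finite_lists_length_eq])
qed

theorem theorem6:
  fixes M :: "('L, 'f, 'w, 'vw) mapping set"
    and ext :: "'vw \<Rightarrow> 'c list set"
    and q :: "('L, 'v) cq"
  assumes "finite M"
    and "\<forall>m \<in> M. wf_mapping m"
    and "\<forall>V. finite (ext V)"
    and "safe_cq q"
    and "atm_no_repeated_rows (unf_program q (wrap M))"
  shows "card (unf_answers q M ext) =
    (\<Sum>C \<in> unf_program q (wrap M). card (eval_rule (wrap_ext M ext) (rule_rep C)))"
proof -
  let ?P = "unf_program q (wrap M)"
  let ?eval = "\<lambda>C. eval_rule (wrap_ext M ext) (rule_rep C)"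
  have "unf_answers q M ext = unf_answers q (wrap M) (wrap_ext M ext)"
    using unf_answers_wrap[OF assms(2,4)] .
  also have "\<dots> = (\<Union>C \<in> ?P. ?eval C)"
    unfolding unf_answers_def unf_program_def UN_eval_rule_rep ..
  finally have answers: "unf_answers q M ext = (\<Union>C \<in> ?P. ?eval C)" .
  have "finite ?P"
    using finite_unf_program[OF _ assms(4,5)] assms(1) by (simp add: wrap_def)
  moreover have "finite (?eval C)" if "C \<in> ?P" for C
    using finite_unf_answers[OF assms(1,2,4,3)] UN_upper[OF that, of ?eval]
    unfolding answers by (rule finite_subset[rotated])
  moreover have "?eval C \<inter> ?eval C' = {}" if "C \<in> ?P" "C' \<in> ?P" "C \<noteq> C'" for C C'
    using eval_rule_rep_disjoint[OF assms(5) that] .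
  ultimately show ?thesis
    unfolding answers by (intro card_UN_disjoint) blast+
qed

end
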